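(* Let $G=(V,E)$ be a finite simple undirected graph with $N=|V|\ge 2$ vertices. Then \[\frac{1}{N}\sum_{v\in V}\tilde C_v(G)\le C(G),\] i.e. the expected average clustering coefficient after deleting a uniformly random vertex is at most $C(G)$.
   Context: For a vertex $u$ of a graph, $d_u$ is its degree and $T(u)$ the number of triangles containing $u$; the local clustering coefficient is $C(u)=\frac{2T(u)}{d_u(d_u-1)}$ if $d_u>1$ and $C(u)=0$ otherwise. The average clustering coefficient of a graph $H$ with $n\ge1$ vertices is $C(H)=\frac1n\sum_{u\in V(H)}C(u)$ (local coefficients computed in $H$). For $v\in V$, $\tilde C_v(G)=C(G[V\setminus\{v\}])$, where $G[S]$ denotes the induced subgraph on $S$. *)

theory Defs
  imports Complex_Main
begin

definition simple_graph :: "'a set \<Rightarrow> ('a \<Rightarrow> 'a \<Rightarrow> bool) \<Rightarrow> bool" where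
  "simple_graph V E \<longleftrightarrow> finite V \<and> (\<forall>u v. E u v \<longrightarrow> E v u) \<and> (\<forall>v. \<not> E v v)
     \<and> (\<forall>u v. E u v \<longrightarrow> u \<in> V \<and> v \<in> V)"

definition nbhd :: "'a set \<Rightarrow> ('a \<Rightarrow> 'a \<Rightarrow> bool) \<Rightarrow> 'a \<Rightarrow> 'a set" where
  "nbhd S E u = {w \<in> S. E u w}"

definition deg :: "'a set \<Rightarrow> ('a \<Rightarrow> 'a \<Rightarrow> bool) \<Rightarrow> 'a \<Rightarrow> nat" where
  "deg S E u = card (nbhd S E u)"

definition triangles :: "'a set \<Rightarrow> ('a \<Rightarrow> 'a \<Rightarrow> bool) \<Rightarrow> 'a \<Rightarrow> nat" where
  "triangles S E u = card {{w, x} | w x. w \<in> nbhd S E u \<and> x \<in> nbhd S E u \<and> E w x}"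

definition local_clustering :: "'a set \<Rightarrow> ('a \<Rightarrow> 'a \<Rightarrow> bool) \<Rightarrow> 'a \<Rightarrow> real" where
  "local_clustering S E u =
     (if deg S E u > 1
      then 2 * real (triangles S E u) / (real (deg S E u) * (real (deg S E u) - 1))
      else 0)"

definition avg_clustering :: "'a set \<Rightarrow> ('a \<Rightarrow> 'a \<Rightarrow> bool) \<Rightarrow> real" where
  "avg_clustering S E = (\<Sum>u\<in>S. local_clustering S E u) / real (card S)"

definition deleted_clustering :: "'a set \<Rightarrow> ('a \<Rightarrow> 'a \<Rightarrow> bool) \<Rightarrow> 'a \<Rightarrow> real" where
  "deleted_clustering V E v = avg_clustering (V - {v}) E"

end

theory Submission
  imports Defs
begin

text \<open>The local coefficient of u only depends on its neighbourhood N, and deleting a vertex v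
  replaces N by N - {v}. If v is not a neighbour, C(u) is unchanged. Deleting each neighbour in
  turn, every adjacent pair of neighbours survives exactly d - 2 of the d deletions (d = |N|), so
  these d local coefficients add up to exactly d C(u) when d \<ge> 3, and to 0 when d \<le> 2.
  Hence the n - 1 deletions of vertices other than u sum to at most (n - 1) C(u), and summing
  over u gives the claim.\<close>

definition adjacent_pairs :: "('a \<Rightarrow> 'a \<Rightarrow> bool) \<Rightarrow> 'a set \<Rightarrow> 'a set set" where
  "adjacent_pairs E N = {{w, x} | w x. w \<in> N \<and> x \<in> N \<and> E w x}"

definition clustering_of_nbhd :: "('a \<Rightarrow> 'a \<Rightarrow> bool) \<Rightarrow> 'a set \<Rightarrow> real" where
  "clustering_of_nbhd E N =
     (if card N > 1
      then 2 * real (card (adjacent_pairs E N)) / (real (card N) * (real (card N) - 1))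
      else 0)"

lemma local_clustering_eq_clustering_of_nbhd:
  "local_clustering S E u = clustering_of_nbhd E (nbhd S E u)"
  unfolding local_clustering_def clustering_of_nbhd_def deg_def triangles_def adjacent_pairs_def
  by simp

lemma clustering_of_nbhd_nonneg: "clustering_of_nbhd E N \<ge> 0"
  unfolding clustering_of_nbhd_def by auto

lemma finite_adjacent_pairs: "finite N \<Longrightarrow> finite (adjacent_pairs E N)"
  by (rule finite_subset[of _ "Pow N"]) (auto simp: adjacent_pairs_def)

lemma adjacent_pairs_Diff_singleton:
  "adjacent_pairs E (N - {v}) = {p \<in> adjacent_pairs E N. v \<notin> p}"
  unfolding adjacent_pairs_def by auto

lemma adjacent_pair_card_subset:
  assumes "\<And>w. \<not> E w w" and "p \<in> adjacent_pairs E N"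
  shows "card p = 2" and "p \<subseteq> N"
  using assms unfolding adjacent_pairs_def by (auto simp: card_insert_if)

text \<open>Double counting: each pair survives the deletion of every vertex of N outside it.\<close>
lemma sum_card_adjacent_pairs_Diff_singleton:
  assumes fin: "finite N" and irrefl: "\<And>w. \<not> E w w"
  shows "(\<Sum>v\<in>N. card (adjacent_pairs E (N - {v}))) = (card N - 2) * card (adjacent_pairs E N)"
proof -
  have "(\<Sum>v\<in>N. card (adjacent_pairs E (N - {v})))
      = (\<Sum>v\<in>N. card {p \<in> adjacent_pairs E N. v \<notin> p})"
    by (simp add: adjacent_pairs_Diff_singleton)
  also have "\<dots> = (\<Sum>p\<in>adjacent_pairs E N. card {v \<in> N. v \<notin> p})"
    using fin finite_adjacent_pairs[OF fin] unfolding card_eq_sum by (rule sum.swap_restrict)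
  also have "\<dots> = (\<Sum>p\<in>adjacent_pairs E N. card N - 2)"
  proof (rule sum.cong)
    fix p assume p: "p \<in> adjacent_pairs E N"
    have "{v \<in> N. v \<notin> p} = N - p" by auto
    then show "card {v \<in> N. v \<notin> p} = card N - 2"
      using adjacent_pair_card_subset[OF irrefl p] fin by (simp add: card_Diff_subset finite_subset)
  qed simp
  finally show ?thesis by simp
qed

lemma sum_clustering_of_nbhd_Diff_singleton_le:
  assumes fin: "finite N" and irrefl: "\<And>w. \<not> E w w"
  shows "(\<Sum>v\<in>N. clustering_of_nbhd E (N - {v})) \<le> real (card N) * clustering_of_nbhd E N"
proof (cases "card N \<ge> 3")
  case False
  then have "clustering_of_nbhd E (N - {v}) = 0" if "v \<in> N" for v
    using that fin unfolding clustering_of_nbhd_def by auto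
  then show ?thesis
    using clustering_of_nbhd_nonneg[of E N] by simp
next
  case True
  define d where "d = real (card N)"
  define T where "T = real (card (adjacent_pairs E N))"
  have d3: "d \<ge> 3" using True by (simp add: d_def)
  have "(\<Sum>v\<in>N. clustering_of_nbhd E (N - {v}))
      = (\<Sum>v\<in>N. 2 * real (card (adjacent_pairs E (N - {v})))) / ((d - 1) * (d - 2))"
    unfolding sum_divide_distrib
    using fin True by (intro sum.cong) (auto simp: clustering_of_nbhd_def d_def of_nat_diff)
  also have "\<dots> = 2 * ((d - 2) * T) / ((d - 1) * (d - 2))"
  proof -
    have "(\<Sum>v\<in>N. real (card (adjacent_pairs E (N - {v}))))
        = real ((card N - 2) * card (adjacent_pairs E N))"
      unfolding of_nat_sum[symmetric] sum_card_adjacent_pairs_Diff_singleton[OF fin irrefl] ..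
    then show ?thesis
      using True by (simp add: sum_distrib_left[symmetric] of_nat_diff d_def T_def)
  qed
  also have "\<dots> = d * (2 * T / (d * (d - 1)))"
    using d3 by (simp add: divide_simps)
  also have "\<dots> = real (card N) * clustering_of_nbhd E N"
    using True by (simp add: clustering_of_nbhd_def d_def T_def)
  finally show ?thesis by simp
qed

lemma sum_local_clustering_delete_vertex_le:
  assumes fin: "finite V" and irrefl: "\<And>w. \<not> E w w" and u: "u \<in> V"
  shows "(\<Sum>v\<in>V - {u}. local_clustering (V - {v}) E u) \<le> real (card V - 1) * local_clustering V E u"
proof -
  define N where "N = nbhd V E u"
  define c where "c = clustering_of_nbhd E N"
  have NV: "N \<subseteq> V - {u}" using irrefl by (auto simp: N_def nbhd_def)
  have finN: "finite N" using NV fin finite_subset by blast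
  have "nbhd (V - {v}) E u = N - {v}" for v
    by (auto simp: N_def nbhd_def)
  then have neighbour: "local_clustering (V - {v}) E u = clustering_of_nbhd E (N - {v})" for v
    by (simp add: local_clustering_eq_clustering_of_nbhd)
  have "(\<Sum>v\<in>V - {u}. local_clustering (V - {v}) E u)
      = (\<Sum>v\<in>N. local_clustering (V - {v}) E u) + (\<Sum>v\<in>V - {u} - N. local_clustering (V - {v}) E u)"
    using NV fin by (simp add: sum.subset_diff finN)
  also have "\<dots> = (\<Sum>v\<in>N. clustering_of_nbhd E (N - {v})) + real (card (V - {u}) - card N) * c"
    using NV fin finN by (simp add: neighbour c_def card_Diff_subset)
  also have "\<dots> \<le> real (card N) * c + real (card (V - {u}) - card N) * c"
    using sum_clustering_of_nbhd_Diff_singleton_le[of N E, OF finN irrefl] by (simp add: c_def)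
  also have "\<dots> = real (card (V - {u})) * c"
    using fin card_mono[OF _ NV] by (simp add: of_nat_diff algebra_simps del: card_Diff_insert)
  finally show ?thesis
    using fin u by (simp add: c_def N_def local_clustering_eq_clustering_of_nbhd)
qed

lemma sum_deleted_clustering_le:
  assumes fin: "finite V" and irrefl: "\<And>w. \<not> E w w" and card: "card V \<ge> 2"
  shows "(\<Sum>v\<in>V. deleted_clustering V E v) \<le> (\<Sum>u\<in>V. local_clustering V E u)"
proof -
  define M where "M = real (card V - 1)"
  have M: "M > 0" using card by (simp add: M_def)
  have "deleted_clustering V E v = (\<Sum>u\<in>V - {v}. local_clustering (V - {v}) E u) / M"
    if "v \<in> V" for v
    using fin that by (simp add: deleted_clustering_def avg_clustering_def M_def)
  then have "(\<Sum>v\<in>V. deleted_clustering V E v)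
      = (\<Sum>v\<in>V. \<Sum>u\<in>V - {v}. local_clustering (V - {v}) E u) / M"
    by (simp add: sum_divide_distrib)
  also have "\<dots> = (\<Sum>u\<in>V. \<Sum>v\<in>V - {u}. local_clustering (V - {v}) E u) / M"
    using fin unfolding set_diff_eq by (subst sum.swap_restrict) (auto simp: eq_commute)
  also have "\<dots> \<le> (\<Sum>u\<in>V. M * local_clustering V E u) / M"
    using M sum_local_clustering_delete_vertex_le[of V E, OF fin irrefl]
    by (intro divide_right_mono sum_mono) (auto simp: M_def)
  also have "\<dots> = (\<Sum>u\<in>V. local_clustering V E u)"
    using M by (simp add: sum_distrib_left[symmetric])
  finally show ?thesis .
qed

theorem mainTheorem6:
  fixes V :: "'a set" and E :: "'a \<Rightarrow> 'a \<Rightarrow> bool"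
  assumes "simple_graph V E" and "card V \<ge> 2"
  shows "(\<Sum>v\<in>V. deleted_clustering V E v) / real (card V) \<le> avg_clustering V E"
proof -
  have "finite V" and "\<And>w. \<not> E w w"
    using assms(1) by (auto simp: simple_graph_def)
  then have "(\<Sum>v\<in>V. deleted_clustering V E v) \<le> (\<Sum>u\<in>V. local_clustering V E u)"
    using assms(2) by (rule sum_deleted_clustering_le)
  then show ?thesis
    unfolding avg_clustering_def by (simp add: divide_right_mono)
qed

end
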